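(* Let $n$ be a positive integer and $g=3n+1$. The map $\sigma$ sends $\mathcal{G}_{2n}(g,q\le3)$ into $\mathcal{C}_{2n+1}(g+1)$ and is injective on $\mathcal{G}_{2n}(g,q\le 3)$. Moreover: (i) if $G\in\mathcal{G}_{2n}(g)$ has depth $2$ and multiplicity $m$, then $\sigma(G)$ is an $(m+1)$-set of depth $2$; (ii) if $G\in\mathcal{G}_{2n}(g)$ has depth $3$ and multiplicity $m$, then $\sigma(G)$ is an $(m+1)$-set of depth $3$.
   Context: A gapset is a finite set $G\subset\mathbb{N}=\{1,2,\dots\}$ such that whenever $z\in G$ and $z=x+y$ with $x,y\in\mathbb{N}$, then $x\in G$ or $y\in G$; its genus is $\#G$. Write $G=\{\ell_1<\dots<\ell_g\}$. Multiplicity $m(G)=\min\{s\in\mathbb{N}:s\notin G\}$; conductor $c(G)=\min\{s\in\mathbb{N}: s+t\notin G\ \forall t\in\mathbb{N}_0\}$; depth $q(G)=\lceil c(G)/m(G)\rceil$. $G$ is pure $\kappa$-sparse if $\ell_{i+1}-\ell_i\le\kappa$ for all $i$ with equality for some $i$; $\mathcal{G}_\kappa(g)$ is the set of pure $\kappa$-sparse gapsets of genus $g$ and $\mathcal{G}_\kappa(g,q\le3)$ those of depth at most $3$. $\mathcal{C}_\kappa(g)$ is the set of subsets of $[1,2g-1]$ with exactly $g$ elements whose maximum difference between consecutive elements (in increasing order) is exactly $\kappa$. For a positive integer $m$, an $m$-set is a set $M\subset\mathbb{N}$ with $[1,m-1]\subseteq M$ and $M\cap m\mathbb{N}=\emptyset$;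 its depth is $\lceil c/m\rceil$ where $c=\max M$. For $G\in\mathcal{G}_{2n}(g)$ let $\alpha=\max\{i:\ell_{i+1}-\ell_i=2n\}$ and $\sigma(G)=\{1\}\cup\{\ell_i+1:1\le i\le\alpha\}\cup\{\ell_i+2:\alpha+1\le i\le g\}$. *)

theory Defs
  imports Main
begin

definition gapset :: "nat set \<Rightarrow> bool" where
  "gapset G \<longleftrightarrow> finite G \<and> 0 \<notin> G \<and>
     (\<forall>z\<in>G. \<forall>x y. 1 \<le> x \<longrightarrow> 1 \<le> y \<longrightarrow> z = x + y \<longrightarrow> x \<in> G \<or> y \<in> G)"

text \<open>The i-th smallest element (1-indexed) of a finite set: ell S i = l_i.\<close>
definition ell :: "nat set \<Rightarrow> nat \<Rightarrow> nat" where
  "ell S i = sorted_list_of_set S ! (i - 1)"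

definition max_consec_diff_eq :: "nat \<Rightarrow> nat set \<Rightarrow> bool" where
  "max_consec_diff_eq \<kappa> S \<longleftrightarrow>
     (\<forall>i. 1 \<le> i \<and> i < card S \<longrightarrow> ell S (i+1) - ell S i \<le> \<kappa>) \<and>
     (\<exists>i. 1 \<le> i \<and> i < card S \<and> ell S (i+1) - ell S i = \<kappa>)"

definition pure_sparse :: "nat \<Rightarrow> nat set \<Rightarrow> bool" where
  "pure_sparse \<kappa> G \<longleftrightarrow> max_consec_diff_eq \<kappa> G"

definition multiplicity :: "nat set \<Rightarrow> nat" where
  "multiplicity G = (LEAST s. 1 \<le> s \<and> s \<notin> G)"

definition conductor :: "nat set \<Rightarrow> nat" where
  "conductor G = (LEAST s. 1 \<le> s \<and> (\<forall>t. s + t \<notin> G))"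

definition ceil_div :: "nat \<Rightarrow> nat \<Rightarrow> nat" where
  "ceil_div c m = (c + m - 1) div m"

definition depth :: "nat set \<Rightarrow> nat" where
  "depth G = ceil_div (conductor G) (multiplicity G)"

definition sparse_gapsets :: "nat \<Rightarrow> nat \<Rightarrow> nat set set" where
  "sparse_gapsets \<kappa> g = {G. gapset G \<and> card G = g \<and> pure_sparse \<kappa> G}"

definition sparse_gapsets_depth_le3 :: "nat \<Rightarrow> nat \<Rightarrow> nat set set" where
  "sparse_gapsets_depth_le3 \<kappa> g = {G \<in> sparse_gapsets \<kappa> g. depth G \<le> 3}"

definition Cset :: "nat \<Rightarrow> nat \<Rightarrow> nat set set" where
  "Cset \<kappa> g = {S. S \<subseteq> {1..2*g-1} \<and> card S = g \<and> max_consec_diff_eq \<kappa> S}"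

definition m_set :: "nat \<Rightarrow> nat set \<Rightarrow> bool" where
  "m_set m M \<longleftrightarrow> 0 \<notin> M \<and> {1..m-1} \<subseteq> M \<and> (\<forall>k\<ge>1. m * k \<notin> M)"

definition m_set_depth :: "nat \<Rightarrow> nat set \<Rightarrow> nat" where
  "m_set_depth m M = ceil_div (Max M) m"

definition sigma_alpha :: "nat \<Rightarrow> nat set \<Rightarrow> nat" where
  "sigma_alpha n G = Max {i. 1 \<le> i \<and> i < card G \<and> ell G (i+1) - ell G i = 2*n}"

definition sigma :: "nat \<Rightarrow> nat set \<Rightarrow> nat set" where
  "sigma n G = {1} \<union> {ell G i + 1 | i. 1 \<le> i \<and> i \<le> sigma_alpha n G}
                    \<union> {ell G i + 2 | i. sigma_alpha n G + 1 \<le> i \<and> i \<le> card G}"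

end

theory Submission
  imports Defs
begin

text \<open>The set \<open>\<sigma>(G)\<close> is enumerated increasingly by \<open>1, \<ell>\<^sub>1 + 1, \<dots>, \<ell>\<^sub>\<alpha> + 1,
  \<ell>\<^bsub>\<alpha>+1\<^esub> + 2, \<dots>, \<ell>\<^sub>g + 2\<close>. Its gaps are therefore those of \<open>G\<close>, except that the last gap of
  maximal size \<open>2n\<close> grows to \<open>2n + 1\<close> while all later gaps stay below \<open>2n\<close>; this places \<open>\<sigma>(G)\<close>
  in \<open>C\<^bsub>2n+1\<^esub>(g + 1)\<close>, and \<open>\<alpha>\<close> (hence \<open>G\<close>) can be read off \<open>\<sigma>(G)\<close>.

  Since \<open>[1, m) \<subseteq> G\<close> forces \<open>\<alpha> \<ge> m - 1\<close>, \<open>\<sigma>(G)\<close> contains \<open>[1, m]\<close> but not \<open>m + 1\<close>, and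
  \<open>max \<sigma>(G) = max G + 2\<close>. As no multiple of \<open>m\<close> is a gap, \<open>max G\<close> lies strictly between \<open>(q - 1) m\<close>
  and \<open>q m\<close>, so \<open>\<sigma>(G)\<close> is an \<open>(m + 1)\<close>-set of the same depth \<open>q \<le> 3\<close> once the multiples of
  \<open>m + 1\<close> below \<open>q (m + 1)\<close> are avoided. For \<open>q = 3\<close> this needs \<open>2m + 2 \<notin> \<sigma>(G)\<close>, i.e.
  \<open>\<ell>\<^sub>\<alpha> < 2m\<close>: otherwise the \<open>2n\<close>-gap above \<open>\<ell>\<^sub>\<alpha>\<close>, together with the pairing property of
  gapsets, produces at least \<open>3n + 4\<close> gaps, more than the genus \<open>3n + 1\<close>.\<close>

lemma ell_strict_mono:
  assumes "finite S" "1 \<le> i" "i < j" "j \<le> card S"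
  shows "ell S i < ell S j"
  using sorted_wrt_nth_less[OF strict_sorted_list_of_set, of "i - 1" "j - 1" S] assms
  by (simp add: ell_def)

lemma ell_mono:
  assumes "finite S" "1 \<le> i" "i \<le> j" "j \<le> card S"
  shows "ell S i \<le> ell S j"
  using ell_strict_mono[OF assms(1,2)] assms(3,4) by (cases "i = j") (auto intro: less_imp_le)

lemma ell_image:
  assumes "finite S"
  shows "ell S ` {1..card S} = S"
proof -
  have "ell S ` {1..card S} = (\<lambda>k. sorted_list_of_set S ! k) ` {..<card S}"
    by (force simp: ell_def image_iff intro: bexI[of _ "Suc _"])
  also have "\<dots> = set (sorted_list_of_set S)"
    by (auto simp: in_set_conv_nth)
  finally show ?thesis
    using assms by simp
qed

lemma ell_of_enumeration:
  assumes step: "\<And>i. 1 \<le> i \<Longrightarrow> i < N \<Longrightarrow> f i < f (Suc i)" and image: "f ` {1..N} = S"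
  shows "card S = N" and "1 \<le> i \<Longrightarrow> i \<le> N \<Longrightarrow> ell S i = f i"
proof -
  define xs where "xs = map (\<lambda>k. f (Suc k)) [0..<N]"
  have "sorted_wrt (<) xs"
    using step by (simp add: sorted_wrt_iff_nth_Suc_transp xs_def)
  moreover have "set xs = S"
    using image by (simp add: xs_def atLeastLessThanSuc_atLeastAtMost flip: image_image)
  ultimately have sorted_list: "sorted_list_of_set S = xs"
    by (auto simp: sorted_list_of_set_sort_remdups strict_sorted_iff distinct_remdups_id sorted_sort_id)
  show "card S = N"
    using sorted_list by (metis length_sorted_list_of_set length_map length_upt diff_zero xs_def)
  show "ell S i = f i" if "1 \<le> i" "i \<le> N"
  proof -
    have "i - 1 < N" "Suc (i - 1) = i"
      using that by simp_all
    then show ?thesis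
      using sorted_list by (simp add: ell_def xs_def)
  qed
qed

lemma gapset_split:
  assumes "gapset G" "z \<in> G" "1 \<le> x" "x < z"
  shows "x \<in> G \<or> z - x \<in> G"
proof -
  have "1 \<le> z - x" "z = x + (z - x)"
    using assms(4) by simp_all
  then show ?thesis
    using assms(1-3) unfolding gapset_def by blast
qed

lemma gapset_one_mem:
  assumes "gapset G" "G \<noteq> {}"
  shows "1 \<in> G"
proof (rule ccontr)
  assume "1 \<notin> G"
  have "finite G" "0 \<notin> G"
    using assms(1) by (auto simp: gapset_def)
  moreover have Min_mem: "Min G \<in> G"
    using \<open>finite G\<close> assms(2) by simp
  ultimately have "2 \<le> Min G"
    using \<open>1 \<notin> G\<close> by (metis less_2_cases not_less One_nat_def)
  then have "Min G - 1 \<in> G"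
    using gapset_split[OF assms(1) Min_mem, of 1] \<open>1 \<notin> G\<close> by simp
  then show False
    using Min_le[OF \<open>finite G\<close>] \<open>2 \<le> Min G\<close> by fastforce
qed

text \<open>Choosing, for each \<open>u \<le> k div 2\<close>, whichever of \<open>c + u\<close>, \<open>c + k - u\<close> lies in \<open>G\<close> is injective.\<close>
lemma half_le_card_of_complementary_pairs:
  assumes "finite G" and pairs: "\<And>u. 1 \<le> u \<Longrightarrow> u < k \<Longrightarrow> c + u \<in> G \<or> c + k - u \<in> G"
  shows "k div 2 \<le> card (G \<inter> {c+1..<c+k})"
proof -
  define f where "f u = (if c + u \<in> G then c + u else c + k - u)" for u
  have "inj_on f {1..k div 2}"
  proof (rule inj_onI)
    fix u v assume "u \<in> {1..k div 2}" "v \<in> {1..k div 2}" "f u = f v"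
    then show "u = v"
      unfolding f_def by (auto split: if_splits)
  qed
  moreover have "f ` {1..k div 2} \<subseteq> G \<inter> {c+1..<c+k}"
    using pairs by (fastforce simp: f_def)
  ultimately have "card {1..k div 2} \<le> card (G \<inter> {c+1..<c+k})"
    using assms(1) by (intro card_inj_on_le) auto
  then show ?thesis
    by simp
qed

lemma gapset_mem_le:
  assumes "gapset G" "z \<in> G"
  shows "z \<le> 2 * card G - 1"
proof -
  have "finite G"
    using assms(1) by (simp add: gapset_def)
  have "z div 2 \<le> card (G \<inter> {1..<z})"
    using half_le_card_of_complementary_pairs[OF \<open>finite G\<close>, of z 0] gapset_split[OF assms] by simp
  moreover have "card (G \<inter> {1..<z}) < card G"
    using assms(2) by (intro psubset_card_mono \<open>finite G\<close>) auto
  ultimately show ?thesis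
    by linarith
qed

lemma multiplicity_props:
  assumes "finite G"
  shows "1 \<le> multiplicity G" "multiplicity G \<notin> G"
    and "1 \<le> x \<Longrightarrow> x < multiplicity G \<Longrightarrow> x \<in> G"
proof -
  obtain b where "\<forall>x\<in>G. x < b"
    using assms finite_nat_set_iff_bounded by auto
  then have "1 \<le> Suc b \<and> Suc b \<notin> G"
    by auto
  then have "1 \<le> multiplicity G \<and> multiplicity G \<notin> G"
    unfolding multiplicity_def by (rule LeastI)
  then show "1 \<le> multiplicity G" "multiplicity G \<notin> G"
    by auto
  show "x \<in> G" if "1 \<le> x" "x < multiplicity G"
    using that not_less_Least unfolding multiplicity_def by blast
qed

lemma gapset_mult_multiplicity_not_mem:
  assumes "gapset G" "1 \<le> k"
  shows "k * multiplicity G \<notin> G"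
  using assms(2)
proof (induction k rule: dec_induct)
  case base
  show ?case
    using assms(1) multiplicity_props(2) by (simp add: gapset_def)
next
  case (step k)
  have "1 \<le> multiplicity G" "multiplicity G \<notin> G"
    using assms(1) multiplicity_props(1,2) by (auto simp: gapset_def)
  then show ?case
    using gapset_split[OF assms(1), of "Suc k * multiplicity G" "multiplicity G"] step
    by (auto simp: mult_le_mono1)
qed

lemma conductor_eq_Max:
  assumes "finite G" "G \<noteq> {}"
  shows "conductor G = Max G + 1"
  unfolding conductor_def
proof (rule Least_equality)
  show "1 \<le> Max G + 1 \<and> (\<forall>t. Max G + 1 + t \<notin> G)"
    using Max_ge[OF assms(1)] by fastforce
  show "Max G + 1 \<le> y" if "1 \<le> y \<and> (\<forall>t. y + t \<notin> G)" for y
  proof (rule ccontr)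
    assume "\<not> Max G + 1 \<le> y"
    then have "y + (Max G - y) = Max G"
      by simp
    then show False
      using that Max_in[OF assms] by metis
  qed
qed

lemma ceil_div_eq_iff:
  assumes "0 < m" "0 < c"
  shows "ceil_div c m = d \<longleftrightarrow> (d - 1) * m < c \<and> c \<le> d * m"
proof -
  have "ceil_div c m = d \<longleftrightarrow> d * m \<le> c + m - 1 \<and> c + m - 1 < Suc d * m"
    unfolding ceil_div_def using assms(1)
    by (meson div_less_iff_less_mult div_times_less_eq_dividend le_less_Suc_eq
        less_eq_div_iff_mult_less_eq)
  also have "\<dots> \<longleftrightarrow> (d - 1) * m < c \<and> c \<le> d * m"
    using assms by (cases d) auto
  finally show ?thesis .
qed

text \<open>The inequalities are strict because no multiple of the multiplicity is a gap.\<close>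
lemma gapset_depth_bounds:
  assumes "gapset G" "G \<noteq> {}" "depth G = d" "2 \<le> d"
  shows "(d - 1) * multiplicity G < Max G" "Max G < d * multiplicity G"
proof -
  have "finite G"
    using assms(1) by (simp add: gapset_def)
  then have "ceil_div (Max G + 1) (multiplicity G) = d"
    using assms(3) by (simp add: depth_def conductor_eq_Max[OF _ assms(2)])
  then have "(d - 1) * multiplicity G < Max G + 1" "Max G + 1 \<le> d * multiplicity G"
    using ceil_div_eq_iff multiplicity_props(1)[OF \<open>finite G\<close>] by auto
  moreover have "(d - 1) * multiplicity G \<notin> G"
    using gapset_mult_multiplicity_not_mem[OF assms(1)] assms(4) by simp
  then have "(d - 1) * multiplicity G \<noteq> Max G"
    using Max_in[OF \<open>finite G\<close> assms(2)] by auto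
  ultimately show "(d - 1) * multiplicity G < Max G" "Max G < d * multiplicity G"
    by linarith+
qed

text \<open>With \<open>b = 2m + k\<close>, the counted gaps are all of \<open>[1, m)\<close>, at least half of \<open>(m, m + k)\<close>
  (pairs summing to \<open>b\<close>), and \<open>m + k = b - m < a < b\<close>.\<close>
lemma gapset_card_lower_bound:
  assumes G: "gapset G" and "a \<in> G" "b \<in> G"
    and "2 * multiplicity G < a" "a < b" "b < a + multiplicity G"
  shows "multiplicity G + (b - 2 * multiplicity G) div 2 + 2 \<le> card G"
proof -
  let ?m = "multiplicity G"
  define k where "k = b - 2 * ?m"
  have "finite G"
    using G by (simp add: gapset_def)
  note mult = multiplicity_props[OF \<open>finite G\<close>]
  have b_eq: "b = 2 * ?m + k"
    using assms(4,5) by (simp add: k_def)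
  define S1 where "S1 = {1..<?m}"
  define S2 where "S2 = G \<inter> {?m+1..<?m+k}"
  define S3 where "S3 = {?m + k, a, b}"
  have "k div 2 \<le> card S2"
    unfolding S2_def
  proof (rule half_le_card_of_complementary_pairs[OF \<open>finite G\<close>])
    fix u assume "1 \<le> u" "u < k"
    then show "?m + u \<in> G \<or> ?m + k - u \<in> G"
      using gapset_split[OF G \<open>b \<in> G\<close>, of "?m + u"] b_eq by (simp add: algebra_simps)
  qed
  moreover have "?m + k \<in> G"
    using gapset_split[OF G \<open>b \<in> G\<close>, of ?m] mult(1,2) b_eq by simp
  then have "card S3 = 3" "S3 \<subseteq> G"
    using assms b_eq by (auto simp: S3_def)
  moreover have "card S1 = ?m - 1" "S1 \<subseteq> G"
    using mult(3) by (auto simp: S1_def)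
  moreover have "S1 \<inter> S2 = {}" "(S1 \<union> S2) \<inter> S3 = {}"
    using assms(6) b_eq by (auto simp: S1_def S2_def S3_def)
  moreover have "finite S1" "finite S2" "finite S3"
    using \<open>finite G\<close> by (auto simp: S1_def S2_def S3_def)
  ultimately have "card S1 + card S2 + card S3 \<le> card G"
    using card_mono[OF \<open>finite G\<close>, of "S1 \<union> S2 \<union> S3"]
    by (simp add: card_Un_disjoint S2_def)
  then show ?thesis
    using \<open>k div 2 \<le> card S2\<close> \<open>card S1 = ?m - 1\<close> \<open>card S3 = 3\<close> mult(1) k_def by linarith
qed

definition sigma_enum :: "nat \<Rightarrow> nat set \<Rightarrow> nat \<Rightarrow> nat" where
  "sigma_enum n G i =
     (if i = 1 then 1 else if i \<le> sigma_alpha n G + 1 then ell G (i - 1) + 1 else ell G (i - 1) + 2)"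

locale pure_sparse_gapset =
  fixes n :: nat and G :: "nat set"
  assumes n_pos: "0 < n" and gapset: "gapset G" and pure_sparse: "pure_sparse (2 * n) G"
begin

abbreviation "L \<equiv> ell G"
abbreviation "g \<equiv> card G"
abbreviation "\<alpha> \<equiv> sigma_alpha n G"
abbreviation "s \<equiv> sigma_enum n G"

lemma finite: "finite G"
  using gapset by (simp add: gapset_def)

lemma nonempty: "G \<noteq> {}"
  using pure_sparse by (auto simp: pure_sparse_def max_consec_diff_eq_def)

lemma ell_less: "1 \<le> i \<Longrightarrow> i < j \<Longrightarrow> j \<le> g \<Longrightarrow> L i < L j"
  using ell_strict_mono[OF finite] .

lemma ell_le: "1 \<le> i \<Longrightarrow> i \<le> j \<Longrightarrow> j \<le> g \<Longrightarrow> L i \<le> L j"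
  using ell_mono[OF finite] .

lemma ell_mem: "1 \<le> i \<Longrightarrow> i \<le> g \<Longrightarrow> L i \<in> G"
  using ell_image[OF finite] by auto

lemma mem_ell: "x \<in> G \<Longrightarrow> \<exists>j. 1 \<le> j \<and> j \<le> g \<and> L j = x"
  using ell_image[OF finite] by force

lemma ell_one: "L 1 = 1"
proof -
  obtain j where "1 \<le> j" "j \<le> g" "L j = 1"
    using mem_ell[OF gapset_one_mem[OF gapset nonempty]] by blast
  moreover have "L 1 \<in> G"
    using ell_mem[of 1] \<open>1 \<le> j\<close> \<open>j \<le> g\<close> by simp
  then have "L 1 \<noteq> 0"
    using gapset unfolding gapset_def by metis
  ultimately show ?thesis
    using ell_le[of 1 j] by simp
qed

lemma Max_eq_ell: "Max G = L g"
proof -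
  obtain j where "1 \<le> j" "j \<le> g" "L j = Max G"
    using mem_ell[OF Max_in[OF finite nonempty]] by blast
  moreover have "L g \<le> Max G" "1 \<le> g"
    using ell_mem[of g] finite nonempty Max_ge by (auto simp: Suc_le_eq card_gt_0_iff)
  ultimately show ?thesis
    using ell_le[of j g] by simp
qed

lemma gap_le: "1 \<le> i \<Longrightarrow> i < g \<Longrightarrow> L (i + 1) \<le> L i + 2 * n"
  using pure_sparse unfolding pure_sparse_def max_consec_diff_eq_def by fastforce

lemma alpha_props: "1 \<le> \<alpha>" "\<alpha> < g" "L (\<alpha> + 1) = L \<alpha> + 2 * n"
  and gap_less_after_alpha: "\<alpha> < i \<Longrightarrow> i < g \<Longrightarrow> L (i + 1) < L i + 2 * n"
proof -
  define A where "A = {i. 1 \<le> i \<and> i < g \<and> L (i + 1) - L i = 2 * n}"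
  have "finite A" "A \<noteq> {}"
    using pure_sparse by (auto simp: A_def pure_sparse_def max_consec_diff_eq_def)
  moreover have "\<alpha> = Max A"
    by (simp add: sigma_alpha_def A_def)
  ultimately have "\<alpha> \<in> A" and above: "\<And>i. i \<in> A \<Longrightarrow> i \<le> \<alpha>"
    by simp_all
  then show "1 \<le> \<alpha>" "\<alpha> < g"
    by (auto simp: A_def)
  then show "L (\<alpha> + 1) = L \<alpha> + 2 * n"
    using \<open>\<alpha> \<in> A\<close> ell_less[of \<alpha> "\<alpha> + 1"] by (simp add: A_def)
  show "L (i + 1) < L i + 2 * n" if "\<alpha> < i" "i < g"
    using that gap_le[of i] above[of i] \<open>1 \<le> \<alpha>\<close> by (fastforce simp: A_def)
qed

lemma sigma_enum_step:
  assumes "1 \<le> i" "i \<le> g"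
  shows "s i < s (Suc i)"
proof -
  consider "i = 1" | "2 \<le> i" "i \<le> \<alpha>" | "i = \<alpha> + 1" | "\<alpha> + 2 \<le> i"
    using assms by linarith
  then show ?thesis
    using alpha_props ell_one ell_less[of "i - 1" i] assms by cases (auto simp: sigma_enum_def)
qed

lemma sigma_enum_image: "s ` {1..g + 1} = sigma n G"
proof (rule set_eqI, rule iffI)
  fix x assume "x \<in> s ` {1..g + 1}"
  then obtain i where i: "1 \<le> i" "i \<le> g + 1" "x = s i"
    by auto
  consider "i = 1" | "2 \<le> i" "i \<le> \<alpha> + 1" | "\<alpha> + 2 \<le> i"
    using i by linarith
  then show "x \<in> sigma n G"
  proof cases
    case 1
    then show ?thesis
      using i by (simp add: sigma_enum_def sigma_def)
  next
    case 2
    then have "x = L (i - 1) + 1" "1 \<le> i - 1" "i - 1 \<le> \<alpha>"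
      using i by (auto simp: sigma_enum_def)
    then show ?thesis
      unfolding sigma_def by blast
  next
    case 3
    then have "x = L (i - 1) + 2" "\<alpha> + 1 \<le> i - 1" "i - 1 \<le> g"
      using i by (auto simp: sigma_enum_def)
    then show ?thesis
      unfolding sigma_def by blast
  qed
next
  fix x assume "x \<in> sigma n G"
  then consider "x = 1" | i where "1 \<le> i" "i \<le> \<alpha>" "x = L i + 1"
    | i where "\<alpha> + 1 \<le> i" "i \<le> g" "x = L i + 2"
    unfolding sigma_def by blast
  then show "x \<in> s ` {1..g + 1}"
  proof cases
    case 1
    then show ?thesis
      by (intro image_eqI[of _ _ 1]) (auto simp: sigma_enum_def)
  next
    case (2 i)
    then show ?thesis
      using alpha_props(2) by (intro image_eqI[of _ _ "i + 1"]) (auto simp: sigma_enum_def)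
  next
    case (3 i)
    then show ?thesis
      by (intro image_eqI[of _ _ "i + 1"]) (auto simp: sigma_enum_def)
  qed
qed

lemma sigma_enum_preimage: "x \<in> sigma n G \<Longrightarrow> \<exists>i. 1 \<le> i \<and> i \<le> g + 1 \<and> s i = x"
  using sigma_enum_image by force

lemma card_sigma: "card (sigma n G) = g + 1"
  and ell_sigma: "1 \<le> i \<Longrightarrow> i \<le> g + 1 \<Longrightarrow> ell (sigma n G) i = s i"
  using ell_of_enumeration[OF sigma_enum_step sigma_enum_image] by simp_all

text \<open>The only gap of \<open>\<sigma>(G)\<close> of size \<open>2n + 1\<close> is \<open>(\<ell>\<^sub>\<alpha> + 1, \<ell>\<^bsub>\<alpha>+1\<^esub> + 2)\<close>: before it the
  gaps of \<open>G\<close> are copied, after it they are all smaller than \<open>2n\<close>.\<close>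
lemma sigma_enum_gap:
  assumes "1 \<le> i" "i \<le> g"
  shows "s (i + 1) - s i \<le> 2 * n + 1" and "s (i + 1) - s i = 2 * n + 1 \<longleftrightarrow> i = \<alpha> + 1"
proof -
  consider "i = 1" | "2 \<le> i" "i \<le> \<alpha>" | "i = \<alpha> + 1" | "\<alpha> + 2 \<le> i"
    using assms by linarith
  then have "s (i + 1) - s i \<le> 2 * n + 1 \<and> (s (i + 1) - s i = 2 * n + 1 \<longleftrightarrow> i = \<alpha> + 1)"
  proof cases
    case 1
    then show ?thesis
      using alpha_props(1) ell_one n_pos by (simp add: sigma_enum_def)
  next
    case 2
    then have "L i \<le> L (i - 1) + 2 * n"
      using gap_le[of "i - 1"] alpha_props(2) by simp
    then show ?thesis
      using 2 by (simp add: sigma_enum_def) arith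
  next
    case 3
    then show ?thesis
      using alpha_props by (simp add: sigma_enum_def)
  next
    case 4
    then have "L i < L (i - 1) + 2 * n"
      using gap_less_after_alpha[of "i - 1"] assms by simp
    then show ?thesis
      using 4 by (simp add: sigma_enum_def) arith
  qed
  then show "s (i + 1) - s i \<le> 2 * n + 1" "s (i + 1) - s i = 2 * n + 1 \<longleftrightarrow> i = \<alpha> + 1"
    by simp_all
qed

lemma sigma_mem_bounds:
  assumes "x \<in> sigma n G"
  shows "1 \<le> x \<and> x \<le> Max G + 2"
proof -
  have L_le_Max: "L i \<le> Max G" if "1 \<le> i" "i \<le> g" for i
    using Max_ge[OF finite ell_mem[OF that]] .
  consider "x = 1" | i where "1 \<le> i" "i \<le> \<alpha>" "x = L i + 1"
    | i where "\<alpha> + 1 \<le> i" "i \<le> g" "x = L i + 2"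
    using assms unfolding sigma_def by blast
  then show ?thesis
  proof cases
    case (2 i)
    then show ?thesis
      using L_le_Max[of i] alpha_props(2) by simp
  next
    case (3 i)
    then show ?thesis
      using L_le_Max[of i] by simp
  qed simp
qed

lemma Max_sigma: "Max (sigma n G) = Max G + 2"
proof (rule Max_eqI)
  show "finite (sigma n G)"
    using sigma_enum_image[symmetric] by simp
  have "L g + 2 \<in> sigma n G"
    using alpha_props(2) unfolding sigma_def by (intro UnI2 CollectI exI[of _ g]) simp
  then show "Max G + 2 \<in> sigma n G"
    by (simp add: Max_eq_ell)
qed (use sigma_mem_bounds in auto)

lemma sigma_in_Cset: "sigma n G \<in> Cset (2 * n + 1) (g + 1)"
proof -
  have "Max G \<le> 2 * g - 1" "0 < g"
    using gapset_mem_le[OF gapset Max_in[OF finite nonempty]] finite nonempty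
    by (simp_all add: card_gt_0_iff)
  then have "sigma n G \<subseteq> {1..2 * (g + 1) - 1}"
    using sigma_mem_bounds by fastforce
  moreover have "max_consec_diff_eq (2 * n + 1) (sigma n G)"
    unfolding max_consec_diff_eq_def card_sigma
    using sigma_enum_gap ell_sigma alpha_props(2)
    by (auto intro!: exI[of _ "\<alpha> + 1"])
  ultimately show ?thesis
    using card_sigma by (simp add: Cset_def)
qed

end

lemma sigma_injective:
  assumes "pure_sparse_gapset n G1" "pure_sparse_gapset n G2" "sigma n G1 = sigma n G2"
  shows "G1 = G2"
proof -
  interpret G1: pure_sparse_gapset n G1 by fact
  interpret G2: pure_sparse_gapset n G2 by fact
  have card_eq: "card G1 = card G2"
    using G1.card_sigma G2.card_sigma assms(3) by simp
  have enum_eq: "sigma_enum n G1 i = sigma_enum n G2 i" if "1 \<le> i" "i \<le> card G1 + 1" for i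
    using G1.ell_sigma G2.ell_sigma that assms(3) card_eq by metis
  let ?a = "sigma_alpha n G1 + 1"
  have "sigma_enum n G2 (?a + 1) - sigma_enum n G2 ?a = 2 * n + 1"
    using G1.sigma_enum_gap(2)[of ?a] enum_eq[of ?a] enum_eq[of "?a + 1"] G1.alpha_props(2) by simp
  then have "sigma_alpha n G1 = sigma_alpha n G2"
    using G2.sigma_enum_gap(2)[of ?a] G1.alpha_props(2) card_eq by simp
  then have "ell G1 i = ell G2 i" if "1 \<le> i" "i \<le> card G1" for i
    using enum_eq[of "i + 1"] that by (simp add: sigma_enum_def split: if_splits)
  then have "ell G1 ` {1..card G1} = ell G2 ` {1..card G2}"
    using card_eq by (auto intro!: image_cong)
  then show ?thesis
    using ell_image[OF G1.finite] ell_image[OF G2.finite] by simp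
qed

context pure_sparse_gapset
begin

abbreviation "m \<equiv> multiplicity G"

lemma multiplicity_not_mem: "m \<notin> G"
  using multiplicity_props(2)[OF finite] .

lemma two_le_multiplicity: "2 \<le> m"
proof -
  have "m \<noteq> 1"
    using multiplicity_not_mem gapset_one_mem[OF gapset nonempty] by auto
  then show ?thesis
    using multiplicity_props(1)[OF finite] by linarith
qed

lemma ell_below_multiplicity:
  assumes "1 \<le> x" "x < m"
  shows "x \<le> g \<and> L x = x"
  using assms
proof (induction x rule: dec_induct)
  case base
  show ?case
    using ell_one finite nonempty by (simp add: Suc_le_eq card_gt_0_iff)
next
  case (step x)
  then have IH: "x \<le> g" "L x = x" and "Suc x \<in> G"
    using multiplicity_props(3)[OF finite] by auto
  then obtain j where j: "1 \<le> j" "j \<le> g" "L j = Suc x"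
    using mem_ell by blast
  with IH have "x < j"
    using ell_le[of j x] by fastforce
  then show ?case
    using ell_le[of "Suc x" j] ell_less[of x "Suc x"] IH j \<open>1 \<le> x\<close> by simp
qed

lemma multiplicity_le_alpha_plus_one: "m \<le> \<alpha> + 1"
proof (rule ccontr)
  assume "\<not> m \<le> \<alpha> + 1"
  then have "L (\<alpha> + 1) = \<alpha> + 1" "L \<alpha> = \<alpha>"
    using ell_below_multiplicity[of "\<alpha> + 1"] ell_below_multiplicity[of \<alpha>] alpha_props(1) by auto
  then show False
    using alpha_props(3) n_pos by simp
qed

lemma atLeastAtMost_multiplicity_subset_sigma: "{1..m} \<subseteq> sigma n G"
proof
  fix x assume x: "x \<in> {1..m}"
  show "x \<in> sigma n G"
  proof (cases "x = 1")
    case False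
    then have "s x = x" "x \<le> g + 1"
      using x ell_below_multiplicity[of "x - 1"] multiplicity_le_alpha_plus_one alpha_props(2)
      by (auto simp: sigma_enum_def)
    then show ?thesis
      using sigma_enum_image x False by force
  qed (simp add: sigma_def)
qed

lemma Suc_multiplicity_not_in_sigma: "m + 1 \<notin> sigma n G"
proof
  assume "m + 1 \<in> sigma n G"
  then obtain i where i: "1 \<le> i" "i \<le> g + 1" "s i = m + 1"
    using sigma_enum_preimage by blast
  consider "i = 1" | "2 \<le> i" "i \<le> \<alpha> + 1" | "\<alpha> + 2 \<le> i"
    using i by linarith
  then show False
  proof cases
    case 1
    then show ?thesis
      using i two_le_multiplicity by (simp add: sigma_enum_def)
  next
    case 2
    then have "L (i - 1) \<in> G"
      using ell_mem[of "i - 1"] alpha_props(2) by simp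
    then show ?thesis
      using i 2 multiplicity_not_mem by (simp add: sigma_enum_def)
  next
    case 3
    then have "L (i - 1) = m - 1"
      using i by (simp add: sigma_enum_def)
    moreover have "L (m - 1) < L (i - 1)"
      using ell_less[of "m - 1" "i - 1"] 3 i multiplicity_le_alpha_plus_one two_le_multiplicity
      by simp
    ultimately show ?thesis
      using ell_below_multiplicity[of "m - 1"] two_le_multiplicity by simp
  qed
qed

lemma twice_multiplicity_plus_two_not_in_sigma:
  assumes "g \<le> 3 * n + 3" "Max G < 3 * m"
  shows "2 * m + 2 \<notin> sigma n G"
proof
  assume "2 * m + 2 \<in> sigma n G"
  then obtain i where i: "1 \<le> i" "i \<le> g + 1" "s i = 2 * m + 2"
    using sigma_enum_preimage by blast
  consider "i = 1" | "2 \<le> i" "i \<le> \<alpha> + 1" | "\<alpha> + 2 \<le> i"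
    using i by linarith
  then show False
  proof cases
    case 1
    then show ?thesis
      using i by (simp add: sigma_enum_def)
  next
    case 3
    then have "L (i - 1) \<in> G"
      using ell_mem[of "i - 1"] i by simp
    then show ?thesis
      using i 3 gapset_mult_multiplicity_not_mem[OF gapset, of 2] by (simp add: sigma_enum_def)
  next
    case 2
    text \<open>Here \<open>\<ell>\<^sub>\<alpha> \<ge> 2m + 1\<close>, and the gap of size \<open>2n\<close> above it forces too many gaps.\<close>
    define a where "a = L \<alpha>"
    have "L (i - 1) \<le> a"
      using ell_le[of "i - 1" \<alpha>] 2 alpha_props(2) by (simp add: a_def)
    then have "2 * m < a"
      using i 2 by (simp add: sigma_enum_def)
    have "a \<in> G"
      using ell_mem[of \<alpha>] alpha_props(1,2) by (simp add: a_def)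
    have "a + 2 * n \<in> G"
      using ell_mem[of "\<alpha> + 1"] alpha_props by (simp add: a_def)
    then have "a + 2 * n < 3 * m"
      using Max_ge[OF finite] assms(2) le_less_trans by blast
    then have "a < a + 2 * n" "a + 2 * n < a + m"
      using n_pos \<open>2 * m < a\<close> by linarith+
    then have "m + (a + 2 * n - 2 * m) div 2 + 2 \<le> g"
      by (rule gapset_card_lower_bound[OF gapset \<open>a \<in> G\<close> \<open>a + 2 * n \<in> G\<close> \<open>2 * m < a\<close>])
    moreover have "n \<le> (a + 2 * n - 2 * m) div 2"
      using \<open>2 * m < a\<close> by linarith
    moreover have "2 * n + 2 \<le> m"
      using \<open>2 * m < a\<close> \<open>a + 2 * n < 3 * m\<close> by linarith
    ultimately show False
      using assms(1) by linarith
  qed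
qed

lemma sigma_m_set_of_depth:
  assumes "depth G = d" "2 \<le> d" "d \<le> 3"
    and excluded: "\<And>k. 1 \<le> k \<Longrightarrow> k < d \<Longrightarrow> (m + 1) * k \<notin> sigma n G"
  shows "m_set (m + 1) (sigma n G) \<and> m_set_depth (m + 1) (sigma n G) = d"
proof -
  have bounds: "(d - 1) * m < Max G" "Max G < d * m"
    using gapset_depth_bounds[OF gapset nonempty assms(1,2)] by simp_all
  have "(m + 1) * k \<notin> sigma n G" if "1 \<le> k" for k
  proof (cases "k < d")
    case False
    have "Max G + 2 < d * m + d"
      using bounds(2) assms(2) by linarith
    also have "\<dots> = (m + 1) * d"
      by (simp add: algebra_simps)
    also have "\<dots> \<le> (m + 1) * k"
      using False by (intro mult_le_mono2) simp
    finally show ?thesis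
      using sigma_mem_bounds by fastforce
  qed (use excluded that in simp)
  then have "m_set (m + 1) (sigma n G)"
    unfolding m_set_def using atLeastAtMost_multiplicity_subset_sigma sigma_mem_bounds by auto
  moreover have "(d - 1) * (m + 1) < Max G + 2 \<and> Max G + 2 \<le> d * (m + 1)"
  proof -
    consider "d = 2" | "d = 3"
      using assms(2,3) by linarith
    then show ?thesis
      using bounds by cases simp_all
  qed
  then have "m_set_depth (m + 1) (sigma n G) = d"
    by (simp add: m_set_depth_def Max_sigma ceil_div_eq_iff)
  ultimately show ?thesis
    by simp
qed

lemma sigma_m_set_depth2:
  assumes "depth G = 2"
  shows "m_set (m + 1) (sigma n G) \<and> m_set_depth (m + 1) (sigma n G) = 2"
proof (rule sigma_m_set_of_depth[OF assms])
  fix k :: nat assume "1 \<le> k" "k < 2"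
  then have "k = 1"
    by simp
  then show "(m + 1) * k \<notin> sigma n G"
    using Suc_multiplicity_not_in_sigma by simp
qed simp_all

lemma sigma_m_set_depth3:
  assumes "g \<le> 3 * n + 3" "depth G = 3"
  shows "m_set (m + 1) (sigma n G) \<and> m_set_depth (m + 1) (sigma n G) = 3"
proof (rule sigma_m_set_of_depth[OF assms(2)])
  fix k :: nat assume "1 \<le> k" "k < 3"
  then consider "k = 1" | "k = 2"
    by linarith
  then show "(m + 1) * k \<notin> sigma n G"
    using Suc_multiplicity_not_in_sigma twice_multiplicity_plus_two_not_in_sigma[OF assms(1)]
      gapset_depth_bounds[OF gapset nonempty assms(2)]
    by cases (simp_all add: algebra_simps)
qed simp_all

end

theorem mainTheorem3:
  fixes n g :: nat
  assumes "0 < n" and "g = 3*n + 1"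
  shows "(\<forall>G \<in> sparse_gapsets_depth_le3 (2*n) g. sigma n G \<in> Cset (2*n+1) (g+1))
       \<and> inj_on (sigma n) (sparse_gapsets_depth_le3 (2*n) g)
       \<and> (\<forall>G \<in> sparse_gapsets (2*n) g. depth G = 2 \<longrightarrow>
            m_set (multiplicity G + 1) (sigma n G) \<and> m_set_depth (multiplicity G + 1) (sigma n G) = 2)
       \<and> (\<forall>G \<in> sparse_gapsets (2*n) g. depth G = 3 \<longrightarrow>
            m_set (multiplicity G + 1) (sigma n G) \<and> m_set_depth (multiplicity G + 1) (sigma n G) = 3)"
proof -
  have sparse: "pure_sparse_gapset n G" "card G = g" if "G \<in> sparse_gapsets (2*n) g" for G
    using that assms(1) by (auto simp: sparse_gapsets_def pure_sparse_gapset_def)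
  have depth_le3: "G \<in> sparse_gapsets (2*n) g" if "G \<in> sparse_gapsets_depth_le3 (2*n) g" for G
    using that by (simp add: sparse_gapsets_depth_le3_def)
  have "sigma n G \<in> Cset (2*n+1) (g+1)" if "G \<in> sparse_gapsets_depth_le3 (2*n) g" for G
    using pure_sparse_gapset.sigma_in_Cset[OF sparse(1)] sparse(2) depth_le3[OF that] by metis
  moreover have "inj_on (sigma n) (sparse_gapsets_depth_le3 (2*n) g)"
    using sigma_injective[OF sparse(1) sparse(1)] depth_le3 by (intro inj_onI) metis
  moreover have "m_set (multiplicity G + 1) (sigma n G) \<and> m_set_depth (multiplicity G + 1) (sigma n G) = d"
    if "G \<in> sparse_gapsets (2*n) g" "depth G = d" "d = 2 \<or> d = 3" for G d
    using pure_sparse_gapset.sigma_m_set_depth2[OF sparse(1)] pure_sparse_gapset.sigma_m_set_depth3[OF sparse(1)]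
      sparse(2) assms(2) that by fastforce
  ultimately show ?thesis
    by blast
qed

end
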